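(* Let $G$ be an optimal digraph on $n$ vertices with $\beta_G > \alpha_G$, and let $\gamma_G = 4(\alpha_G+\beta_G) - 3n$. Then $-1 \leq \gamma_G \leq 1$. Furthermore, $\gamma_G = -1$ if some vertex is incident with a longest edge and with no shortest non-edge, and $\gamma_G = 1$ if some vertex is incident with a shortest non-edge and with no longest edge.
   Context: Digraphs are finite, loopless, with at most one edge $uv$ per ordered pair. A digraph is $2$-free if no distinct $u,v$ have both $uv,vu$ as edges. A circular interval digraph is a digraph together with a fixed arrangement of its vertices in a circle such that for all distinct $u,v,w$ in clockwise order with $uw\in E(G)$, also $uv,vw\in E(G)$. For distinct $u,v$, $d(u,v) = 1 + |\{w: u,w,v \text{ distinct, in clockwise order}\}|$; this is the length of the ordered pair $uv$. A non-edge is an ordered pair $(u,v)$ of distinct vertices with neither $uv$ nor $vu$ an edge; its length is $d(u,v)$. $\alpha_G$ is the minimum length of a non-edge ($\infty$ if none) and $\beta_G$ the maximum length of an edge ($0$ if none). A longest edge is an edge of length $\beta_G$; a shortest non-edge is a non-edge of length $\alpha_G$. A vertex $x$ is incident with a pair $(u,v)$ if $x\in\{u,v\}$. $\xi(G)$ is the number of pairs $(uv,(w,x))$ with $uv\in E(G)$, $(w,x)$ a non-edge, $d(u,v)>d(w,x)$. $\tilde P_3(G)$ is the number of triples $(a,b,c)$ of distinct vertices with $ab,bc\in E(G)$ and $ac,ca\notin E(G)$. For fixed $n\ge 4$, $G$ is optimal if it is a $2$-free circular interval digraph on $n$ vertices maximizing $\tilde P_3$ among all such digraphs and, subject to this,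 minimizing $\xi(G)$. *)

theory Defs
  imports Main "HOL-Library.Extended_Nat"
begin

text \<open>Vertices of a digraph on n vertices are 0,...,n-1, arranged clockwise in
this order around the circle. A digraph is given by its edge set of ordered pairs.\<close>

definition cdist :: "nat \<Rightarrow> nat \<Rightarrow> nat \<Rightarrow> nat" where
  "cdist n u v = (v + n - u) mod n"

definition clockwise :: "nat \<Rightarrow> nat \<Rightarrow> nat \<Rightarrow> nat \<Rightarrow> bool" where
  "clockwise n u v w \<longleftrightarrow> u \<noteq> v \<and> v \<noteq> w \<and> u \<noteq> w \<and> cdist n u v < cdist n u w"

definition is_digraph :: "nat \<Rightarrow> (nat \<times> nat) set \<Rightarrow> bool" where
  "is_digraph n E \<longleftrightarrow> E \<subseteq> {..<n} \<times> {..<n} \<and> (\<forall>u. (u, u) \<notin> E)"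

definition two_free :: "(nat \<times> nat) set \<Rightarrow> bool" where
  "two_free E \<longleftrightarrow> (\<forall>u v. u \<noteq> v \<longrightarrow> \<not> ((u, v) \<in> E \<and> (v, u) \<in> E))"

definition circ_interval :: "nat \<Rightarrow> (nat \<times> nat) set \<Rightarrow> bool" where
  "circ_interval n E \<longleftrightarrow> is_digraph n E \<and>
     (\<forall>u<n. \<forall>v<n. \<forall>w<n. clockwise n u v w \<and> (u, w) \<in> E \<longrightarrow> (u, v) \<in> E \<and> (v, w) \<in> E)"

definition admissible :: "nat \<Rightarrow> (nat \<times> nat) set \<Rightarrow> bool" where
  "admissible n E \<longleftrightarrow> circ_interval n E \<and> two_free E"

definition nonedges :: "nat \<Rightarrow> (nat \<times> nat) set \<Rightarrow> (nat \<times> nat) set" where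
  "nonedges n E = {(u, v). u < n \<and> v < n \<and> u \<noteq> v \<and> (u, v) \<notin> E \<and> (v, u) \<notin> E}"

definition plen :: "nat \<Rightarrow> nat \<times> nat \<Rightarrow> nat" where
  "plen n p = cdist n (fst p) (snd p)"

definition alphaG :: "nat \<Rightarrow> (nat \<times> nat) set \<Rightarrow> enat" where
  "alphaG n E = (if nonedges n E = {} then \<infinity> else enat (Min (plen n ` nonedges n E)))"

definition betaG :: "nat \<Rightarrow> (nat \<times> nat) set \<Rightarrow> nat" where
  "betaG n E = (if E = {} then 0 else Max (plen n ` E))"

definition xi :: "nat \<Rightarrow> (nat \<times> nat) set \<Rightarrow> nat" where
  "xi n E = card {(e, f). e \<in> E \<and> f \<in> nonedges n E \<and> plen n e > plen n f}"

definition P3t :: "nat \<Rightarrow> (nat \<times> nat) set \<Rightarrow> nat" where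
  "P3t n E = card {(a, b, c). a < n \<and> b < n \<and> c < n \<and> a \<noteq> b \<and> b \<noteq> c \<and> a \<noteq> c \<and>
      (a, b) \<in> E \<and> (b, c) \<in> E \<and> (a, c) \<notin> E \<and> (c, a) \<notin> E}"

definition optimal :: "nat \<Rightarrow> (nat \<times> nat) set \<Rightarrow> bool" where
  "optimal n E \<longleftrightarrow> admissible n E \<and>
     (\<forall>E'. admissible n E' \<longrightarrow> P3t n E' \<le> P3t n E) \<and>
     (\<forall>E'. admissible n E' \<and> P3t n E' = P3t n E \<longrightarrow> xi n E \<le> xi n E')"

definition incident :: "nat \<Rightarrow> nat \<times> nat \<Rightarrow> bool" where
  "incident x p \<longleftrightarrow> x = fst p \<or> x = snd p"

definition longest_edge :: "nat \<Rightarrow> (nat \<times> nat) set \<Rightarrow> nat \<times> nat \<Rightarrow> bool" where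
  "longest_edge n E p \<longleftrightarrow> p \<in> E \<and> plen n p = betaG n E"

definition shortest_nonedge :: "nat \<Rightarrow> (nat \<times> nat) set \<Rightarrow> nat \<times> nat \<Rightarrow> bool" where
  "shortest_nonedge n E p \<longleftrightarrow> p \<in> nonedges n E \<and> enat (plen n p) = alphaG n E"

end

theory Submission
  imports Defs
begin

(*
  The proof compares the optimal digraph E with two admissible modifications: deleting a
  longest edge u -> v and inserting a shortest non-edge w -> x.  One exchange identity
  (P3_exchange) describes the induced 2-paths such a modification destroys and creates in
  terms of the out-neighbours of the head and the in-neighbours of the tail.  Both
  modifications strictly reduce the number xi of inversions (for the deletion once
  2 beta <= n is known), so optimality forces them to strictly reduce the number of induced
  2-paths.  Every vertex reaches all vertices closer than alpha and none farther than beta;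
  comparing these neighbourhood sizes with the counts gives 4(alpha + beta) <= 3n + 1 from
  the deletion and 3n <= 4(alpha + beta) + 1 from the insertion, each sharpened by one when
  an end of the modified pair lies on no shortest non-edge, resp. no longest edge.
*)

lemma cdist_eq:
  assumes "u < n" "v < n"
  shows "cdist n u v = (if u \<le> v then v - u else v + n - u)"
  using assms by (auto simp: cdist_def mod_if)

lemma cdist_less: "u < n \<Longrightarrow> v < n \<Longrightarrow> cdist n u v < n"
  by (auto simp: cdist_eq)

lemma cdist_pos_iff: "u < n \<Longrightarrow> v < n \<Longrightarrow> 0 < cdist n u v \<longleftrightarrow> u \<noteq> v"
  by (auto simp: cdist_eq)

lemma cdist_swap: "u < n \<Longrightarrow> v < n \<Longrightarrow> u \<noteq> v \<Longrightarrow> cdist n u v + cdist n v u = n"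
  by (auto simp: cdist_eq)

lemma cdist_inj_right: "u < n \<Longrightarrow> v < n \<Longrightarrow> w < n \<Longrightarrow> cdist n u v = cdist n u w \<Longrightarrow> v = w"
  by (auto simp: cdist_eq split: if_splits)

lemma cdist_inj_left: "u < n \<Longrightarrow> v < n \<Longrightarrow> w < n \<Longrightarrow> cdist n v u = cdist n w u \<Longrightarrow> v = w"
  by (auto simp: cdist_eq split: if_splits)

lemma clockwise_iff:
  "u < n \<Longrightarrow> v < n \<Longrightarrow> w < n \<Longrightarrow>
     clockwise n u v w \<longleftrightarrow> 0 < cdist n u v \<and> cdist n u v < cdist n u w"
  by (auto simp: clockwise_def cdist_eq split: if_splits)

lemma clockwise_add:
  "u < n \<Longrightarrow> v < n \<Longrightarrow> w < n \<Longrightarrow> clockwise n u v w \<Longrightarrow> cdist n u v + cdist n v w = cdist n u w"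
  by (auto simp: clockwise_def cdist_eq split: if_splits)

lemma clockwise_rotate:
  "u < n \<Longrightarrow> v < n \<Longrightarrow> w < n \<Longrightarrow> clockwise n u v w \<Longrightarrow> clockwise n v w u"
  by (auto simp: clockwise_def cdist_eq split: if_splits)

lemma card_vimage_bij:
  assumes "bij_betw f A B"
  shows "card {z \<in> A. P (f z)} = card {k \<in> B. P k}"
proof -
  have "bij_betw f {z \<in> A. P (f z)} {k \<in> B. P k}"
    using assms by (auto simp: bij_betw_def inj_on_def)
  then show ?thesis by (rule bij_betw_same_card)
qed

lemma bij_cdist_right:
  assumes "u < n"
  shows "bij_betw (cdist n u) {..<n} {..<n}"
proof -
  have "inj_on (cdist n u) {..<n}"
    using assms cdist_inj_right by (intro inj_onI) auto
  moreover have "cdist n u ` {..<n} \<subseteq> {..<n}"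
    using assms cdist_less by auto
  ultimately show ?thesis
    unfolding bij_betw_def by (simp add: endo_inj_surj)
qed

lemma bij_cdist_left:
  assumes "u < n"
  shows "bij_betw (\<lambda>z. cdist n z u) {..<n} {..<n}"
proof -
  have "inj_on (\<lambda>z. cdist n z u) {..<n}"
    using assms cdist_inj_left by (intro inj_onI) auto
  moreover have "(\<lambda>z. cdist n z u) ` {..<n} \<subseteq> {..<n}"
    using assms cdist_less by auto
  ultimately show ?thesis
    unfolding bij_betw_def by (simp add: endo_inj_surj)
qed

definition out_ball :: "nat \<Rightarrow> nat \<Rightarrow> nat \<Rightarrow> nat set" where
  "out_ball n x m = {z. z < n \<and> 0 < cdist n x z \<and> cdist n x z < m}"

definition in_ball :: "nat \<Rightarrow> nat \<Rightarrow> nat \<Rightarrow> nat set" where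
  "in_ball n x m = {z. z < n \<and> 0 < cdist n z x \<and> cdist n z x < m}"

text \<open>Distance balls around a vertex, measured clockwise from it (\<open>out_ball\<close>) or towards it
  (\<open>in_ball\<close>); since distance from or to a fixed vertex is a bijection of the vertex set,
  a ball of radius \<open>m \<le> n\<close> has \<open>m - 1\<close> vertices besides the centre.\<close>
lemma card_out_ball:
  assumes "x < n" "m \<le> n"
  shows "card (out_ball n x m) = m - 1"
proof -
  have "out_ball n x m = {z \<in> {..<n}. 0 < cdist n x z \<and> cdist n x z < m}"
    by (auto simp: out_ball_def)
  then have "card (out_ball n x m) = card {k \<in> {..<n}. 0 < k \<and> k < m}"
    using card_vimage_bij[OF bij_cdist_right[OF assms(1)], of "\<lambda>k. 0 < k \<and> k < m"] by simp
  also have "{k \<in> {..<n}. 0 < k \<and> k < m} = {1..<m}"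
    using assms(2) by auto
  finally show ?thesis by simp
qed

lemma card_in_ball:
  assumes "x < n" "m \<le> n"
  shows "card (in_ball n x m) = m - 1"
proof -
  have "in_ball n x m = {z \<in> {..<n}. 0 < cdist n z x \<and> cdist n z x < m}"
    by (auto simp: in_ball_def)
  then have "card (in_ball n x m) = card {k \<in> {..<n}. 0 < k \<and> k < m}"
    using card_vimage_bij[OF bij_cdist_left[OF assms(1)], of "\<lambda>k. 0 < k \<and> k < m"] by simp
  also have "{k \<in> {..<n}. 0 < k \<and> k < m} = {1..<m}"
    using assms(2) by auto
  finally show ?thesis by simp
qed

lemma finite_balls [simp]: "finite (out_ball n x m)" "finite (in_ball n x m)"
  by (simp_all add: out_ball_def in_ball_def)

definition arc :: "nat \<Rightarrow> nat \<Rightarrow> nat \<Rightarrow> nat set" where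
  "arc n x y = {z. z < n \<and> clockwise n x z y}"

lemma arc_eq_out_ball: "x < n \<Longrightarrow> y < n \<Longrightarrow> arc n x y = out_ball n x (cdist n x y)"
  by (auto simp: arc_def out_ball_def clockwise_iff)

lemma card_arc: "x < n \<Longrightarrow> y < n \<Longrightarrow> card (arc n x y) = cdist n x y - 1"
  by (simp add: arc_eq_out_ball card_out_ball cdist_less less_imp_le)

lemma finite_arc: "finite (arc n x y)"
  by (simp add: arc_def)

definition out_nbrs :: "(nat \<times> nat) set \<Rightarrow> nat \<Rightarrow> nat set" where
  "out_nbrs F x = {z. (x, z) \<in> F}"

definition in_nbrs :: "(nat \<times> nat) set \<Rightarrow> nat \<Rightarrow> nat set" where
  "in_nbrs F x = {z. (z, x) \<in> F}"

lemma mem_out_nbrs [simp]: "z \<in> out_nbrs F x \<longleftrightarrow> (x, z) \<in> F"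
  by (simp add: out_nbrs_def)

lemma mem_in_nbrs [simp]: "z \<in> in_nbrs F x \<longleftrightarrow> (z, x) \<in> F"
  by (simp add: in_nbrs_def)

lemma finite_nbrs:
  assumes "is_digraph n F"
  shows "finite (out_nbrs F x)" "finite (in_nbrs F x)"
proof -
  have "out_nbrs F x \<subseteq> {..<n}" "in_nbrs F x \<subseteq> {..<n}"
    using assms by (auto simp: is_digraph_def)
  then show "finite (out_nbrs F x)" "finite (in_nbrs F x)"
    by (auto intro: finite_subset)
qed

locale circ_digraph =
  fixes n :: nat and E :: "(nat \<times> nat) set"
  assumes admissible: "admissible n E"
begin

abbreviation \<alpha> :: nat where "\<alpha> \<equiv> the_enat (alphaG n E)"
abbreviation \<beta> :: nat where "\<beta> \<equiv> betaG n E"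

abbreviation on_longest_edge :: "nat \<Rightarrow> bool" where
  "on_longest_edge y \<equiv> \<exists>p. longest_edge n E p \<and> incident y p"

abbreviation on_shortest_nonedge :: "nat \<Rightarrow> bool" where
  "on_shortest_nonedge y \<equiv> \<exists>q. shortest_nonedge n E q \<and> incident y q"

lemma digraph: "is_digraph n E"
  using admissible by (simp add: admissible_def circ_interval_def)

lemma edgeD: "(x, y) \<in> E \<Longrightarrow> x < n \<and> y < n \<and> x \<noteq> y"
  using digraph unfolding is_digraph_def by blast

lemma interval: "(u, w) \<in> E \<Longrightarrow> v < n \<Longrightarrow> clockwise n u v w \<Longrightarrow> (u, v) \<in> E \<and> (v, w) \<in> E"
  using admissible edgeD unfolding admissible_def circ_interval_def by blast

lemma antisym: "(u, v) \<in> E \<Longrightarrow> (v, u) \<notin> E"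
  using admissible edgeD unfolding admissible_def two_free_def by blast

lemma finite_edges: "finite E"
  using digraph finite_subset[of E "{..<n} \<times> {..<n}"] by (auto simp: is_digraph_def)

lemma finite_nonedges: "finite (nonedges n E)"
  using finite_subset[of "nonedges n E" "{..<n} \<times> {..<n}"] by (auto simp: nonedges_def)

lemma edge_length_le: "(x, y) \<in> E \<Longrightarrow> cdist n x y \<le> \<beta>"
proof -
  assume "(x, y) \<in> E"
  then have "cdist n x y \<in> plen n ` E"
    by (force simp: plen_def)
  then show ?thesis
    using finite_edges by (auto simp: betaG_def)
qed

lemma nonedge_length_ge: "(x, y) \<in> nonedges n E \<Longrightarrow> \<alpha> \<le> cdist n x y"
proof -
  assume "(x, y) \<in> nonedges n E"
  then have "cdist n x y \<in> plen n ` nonedges n E"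
    by (force simp: plen_def)
  then show ?thesis
    using finite_nonedges by (auto simp: alphaG_def)
qed

lemma nonedge_at_unmarked_vertex:
  assumes "(a, b) \<in> nonedges n E" "incident y (a, b)" "\<not> on_shortest_nonedge y"
  shows "\<alpha> < cdist n a b"
proof -
  have "alphaG n E = enat \<alpha>"
    using assms(1) by (auto simp: alphaG_def)
  then have "cdist n a b \<noteq> \<alpha>"
    using assms by (auto simp: shortest_nonedge_def plen_def)
  then show ?thesis
    using nonedge_length_ge[OF assms(1)] by simp
qed

text \<open>If \<open>x \<rightarrow> w\<close> is not an edge, every out-neighbour of \<open>x\<close> and every in-neighbour of
  \<open>w\<close> lies strictly inside the clockwise arc from \<open>x\<close> to \<open>w\<close>: otherwise the interval
  property would force \<open>x \<rightarrow> w\<close>.\<close>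
lemma out_nbrs_in_arc:
  assumes "x < n" "w < n" "x \<noteq> w" "(x, w) \<notin> E"
  shows "out_nbrs E x \<subseteq> arc n x w"
proof
  fix z assume "z \<in> out_nbrs E x"
  then have xz: "(x, z) \<in> E" by simp
  then have z: "z < n" "z \<noteq> x" "z \<noteq> w"
    using edgeD assms(4) by auto
  have "\<not> clockwise n x w z"
    using interval[OF xz] assms by blast
  moreover have "cdist n x z \<noteq> cdist n x w"
    using z assms cdist_inj_right by blast
  ultimately have "cdist n x z < cdist n x w"
    using z assms by (auto simp: clockwise_iff cdist_pos_iff)
  then show "z \<in> arc n x w"
    using z assms by (simp add: arc_def clockwise_iff cdist_pos_iff)
qed

lemma in_nbrs_in_arc:
  assumes "x < n" "w < n" "x \<noteq> w" "(x, w) \<notin> E"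
  shows "in_nbrs E w \<subseteq> arc n x w"
proof
  fix z assume "z \<in> in_nbrs E w"
  then have zw: "(z, w) \<in> E" by simp
  then have z: "z < n" "z \<noteq> w" "z \<noteq> x"
    using edgeD assms(4) by auto
  have "\<not> clockwise n z x w"
    using interval[OF zw] assms by blast
  then have "\<not> clockwise n x w z"
    using z assms clockwise_rotate by blast
  moreover have "cdist n x z \<noteq> cdist n x w"
    using z assms cdist_inj_right by blast
  ultimately have "cdist n x z < cdist n x w"
    using z assms by (auto simp: clockwise_iff cdist_pos_iff)
  then show "z \<in> arc n x w"
    using z assms by (simp add: arc_def clockwise_iff cdist_pos_iff)
qed

lemma out_nbrs_sub_ball:
  assumes "y < n"
  shows "out_nbrs E y \<subseteq> out_ball n y (\<beta> + 1)"
    and "\<not> on_longest_edge y \<Longrightarrow> out_nbrs E y \<subseteq> out_ball n y \<beta>"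
proof -
  have len: "z < n \<and> 0 < cdist n y z \<and> cdist n y z \<le> \<beta>" if "(y, z) \<in> E" for z
    using edge_length_le[OF that] edgeD[OF that] by (auto simp: cdist_pos_iff)
  then show "out_nbrs E y \<subseteq> out_ball n y (\<beta> + 1)"
    by (fastforce simp: out_ball_def)
  assume "\<not> on_longest_edge y"
  then have "cdist n y z \<noteq> \<beta>" if "(y, z) \<in> E" for z
    using that by (auto simp: longest_edge_def incident_def plen_def)
  then show "out_nbrs E y \<subseteq> out_ball n y \<beta>"
    using len by (fastforce simp: out_ball_def)
qed

lemma in_nbrs_sub_ball:
  assumes "y < n"
  shows "in_nbrs E y \<subseteq> in_ball n y (\<beta> + 1)"
    and "\<not> on_longest_edge y \<Longrightarrow> in_nbrs E y \<subseteq> in_ball n y \<beta>"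
proof -
  have len: "z < n \<and> 0 < cdist n z y \<and> cdist n z y \<le> \<beta>" if "(z, y) \<in> E" for z
    using edge_length_le[OF that] edgeD[OF that] by (auto simp: cdist_pos_iff)
  then show "in_nbrs E y \<subseteq> in_ball n y (\<beta> + 1)"
    by (fastforce simp: in_ball_def)
  assume "\<not> on_longest_edge y"
  then have "cdist n z y \<noteq> \<beta>" if "(z, y) \<in> E" for z
    using that by (auto simp: longest_edge_def incident_def plen_def)
  then show "in_nbrs E y \<subseteq> in_ball n y \<beta>"
    using len by (fastforce simp: in_ball_def)
qed

text \<open>Conversely, a pair at \<open>y\<close> that is too short to be a non-edge, and whose reverse is
  too long to be an edge, is an edge.\<close>
lemma out_ball_sub_out_nbrs:
  assumes "y < n" "m + \<beta> \<le> n" "m \<le> \<alpha> \<or> \<not> on_shortest_nonedge y \<and> m \<le> \<alpha> + 1"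
  shows "out_ball n y m \<subseteq> out_nbrs E y"
proof
  fix z assume "z \<in> out_ball n y m"
  then have z: "z < n" "z \<noteq> y" "cdist n y z < m"
    using assms(1) by (auto simp: out_ball_def cdist_pos_iff)
  have "(y, z) \<notin> nonedges n E"
    using z assms(3) nonedge_length_ge nonedge_at_unmarked_vertex[of y z y]
    by (fastforce simp: incident_def)
  moreover have "(z, y) \<notin> E"
  proof
    assume "(z, y) \<in> E"
    then have "cdist n z y \<le> \<beta>" by (rule edge_length_le)
    then show False
      using cdist_swap[of y n z] z assms by linarith
  qed
  ultimately show "z \<in> out_nbrs E y"
    using z assms(1) by (auto simp: nonedges_def)
qed

lemma in_ball_sub_in_nbrs:
  assumes "y < n" "m + \<beta> \<le> n" "m \<le> \<alpha> \<or> \<not> on_shortest_nonedge y \<and> m \<le> \<alpha> + 1"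
  shows "in_ball n y m \<subseteq> in_nbrs E y"
proof
  fix z assume "z \<in> in_ball n y m"
  then have z: "z < n" "z \<noteq> y" "cdist n z y < m"
    using assms(1) by (auto simp: in_ball_def cdist_pos_iff)
  have "(z, y) \<notin> nonedges n E"
    using z assms(3) nonedge_length_ge nonedge_at_unmarked_vertex[of z y y]
    by (fastforce simp: incident_def)
  moreover have "(y, z) \<notin> E"
  proof
    assume "(y, z) \<in> E"
    then have "cdist n y z \<le> \<beta>" by (rule edge_length_le)
    then show False
      using cdist_swap[of y n z] z assms by linarith
  qed
  ultimately show "z \<in> in_nbrs E y"
    using z assms(1) by (auto simp: nonedges_def)
qed

end

definition P3_set :: "nat \<Rightarrow> (nat \<times> nat) set \<Rightarrow> (nat \<times> nat \<times> nat) set" where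
  "P3_set n F = {(a, b, c). a < n \<and> b < n \<and> c < n \<and> a \<noteq> b \<and> b \<noteq> c \<and> a \<noteq> c \<and>
      (a, b) \<in> F \<and> (b, c) \<in> F \<and> (a, c) \<notin> F \<and> (c, a) \<notin> F}"

lemma P3t_eq_card: "P3t n F = card (P3_set n F)"
  by (simp add: P3t_def P3_set_def)

lemma finite_P3_set: "finite (P3_set n F)"
  by (rule finite_subset[of _ "{..<n} \<times> {..<n} \<times> {..<n}"]) (auto simp: P3_set_def)

definition P3_using :: "nat \<Rightarrow> (nat \<times> nat) set \<Rightarrow> nat \<times> nat \<Rightarrow> (nat \<times> nat \<times> nat) set" where
  "P3_using n F p = {(a, b, c). (a, b, c) \<in> P3_set n F \<and> ((a, b) = p \<or> (b, c) = p)}"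

definition P3_spanning :: "nat \<Rightarrow> (nat \<times> nat) set \<Rightarrow> nat \<times> nat \<Rightarrow> (nat \<times> nat \<times> nat) set" where
  "P3_spanning n F p = {(a, b, c). (a, b, c) \<in> P3_set n F \<and> ((a, c) = p \<or> (c, a) = p)}"

text \<open>Removing an edge \<open>p\<close> from a digraph destroys exactly the 2-paths using \<open>p\<close> and creates
  exactly the 2-paths whose ends are joined by \<open>p\<close> only.\<close>
lemma P3_exchange:
  assumes "p \<in> F"
  shows "card (P3_set n F) + card (P3_spanning n (F - {p}) p)
     = card (P3_set n (F - {p})) + card (P3_using n F p)"
proof -
  let ?S = "P3_set n F" and ?T = "P3_set n (F - {p})"
  have lost: "?S - ?T = P3_using n F p"
    by (auto simp: P3_set_def P3_using_def)
  have gained: "?T - ?S = P3_spanning n (F - {p}) p"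
    using assms by (auto simp: P3_set_def P3_spanning_def)
  have "card ?S = card (?S \<inter> ?T) + card (?S - ?T)" "card ?T = card (?T \<inter> ?S) + card (?T - ?S)"
    using finite_P3_set by (simp_all add: card_Int_Diff)
  then show ?thesis
    using lost gained by (simp add: Int_commute)
qed

lemma card_Un_images:
  assumes "finite A" "finite B" "inj f" "inj g" "f ` A \<inter> g ` B = {}"
  shows "card (f ` A \<union> g ` B) = card A + card B"
  using assms by (simp add: card_Un_disjoint card_image inj_on_subset)

lemma card_P3_spanning:
  assumes F: "is_digraph n F" and uv: "u < n" "v < n" "u \<noteq> v" "(u, v) \<notin> F" "(v, u) \<notin> F"
  shows "card (P3_spanning n F (u, v))
           = card (out_nbrs F u \<inter> in_nbrs F v) + card (out_nbrs F v \<inter> in_nbrs F u)"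
proof -
  let ?A = "out_nbrs F u \<inter> in_nbrs F v" and ?B = "out_nbrs F v \<inter> in_nbrs F u"
  have "P3_spanning n F (u, v) = (\<lambda>z. (u, z, v)) ` ?A \<union> (\<lambda>z. (v, z, u)) ` ?B"
    using F uv by (auto simp: P3_spanning_def P3_set_def is_digraph_def)
  moreover have "finite ?A" "finite ?B"
    using finite_nbrs[OF F] by auto
  moreover have "(\<lambda>z. (u, z, v)) ` ?A \<inter> (\<lambda>z. (v, z, u)) ` ?B = {}"
    using uv by auto
  ultimately show ?thesis
    by (simp add: card_Un_images inj_def)
qed

lemma card_P3_using:
  assumes F: "is_digraph n F" and uv: "(u, v) \<in> F"
  shows "card (P3_using n F (u, v))
           = card (out_nbrs F v - ({u} \<union> out_nbrs F u \<union> in_nbrs F u))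
             + card (in_nbrs F u - ({v} \<union> out_nbrs F v \<union> in_nbrs F v))"
proof -
  let ?A = "out_nbrs F v - ({u} \<union> out_nbrs F u \<union> in_nbrs F u)"
  let ?B = "in_nbrs F u - ({v} \<union> out_nbrs F v \<union> in_nbrs F v)"
  have "P3_using n F (u, v) = (\<lambda>z. (u, v, z)) ` ?A \<union> (\<lambda>z. (z, u, v)) ` ?B"
    using F uv by (auto simp: P3_using_def P3_set_def is_digraph_def)
  moreover have "finite ?A" "finite ?B"
    using finite_nbrs[OF F] by auto
  moreover have "(\<lambda>z. (u, v, z)) ` ?A \<inter> (\<lambda>z. (z, u, v)) ` ?B = {}"
    using F uv by (auto simp: is_digraph_def)
  ultimately show ?thesis
    by (simp add: card_Un_images inj_def)
qed

definition inversions :: "nat \<Rightarrow> (nat \<times> nat) set \<Rightarrow> ((nat \<times> nat) \<times> (nat \<times> nat)) set" where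
  "inversions n F = {(e, f). e \<in> F \<and> f \<in> nonedges n F \<and> plen n e > plen n f}"

lemma xi_eq_card: "xi n F = card (inversions n F)"
  by (simp add: xi_def inversions_def)

lemma xi_less:
  assumes "finite F" "inversions n F' \<subseteq> inversions n F" "i \<in> inversions n F" "i \<notin> inversions n F'"
  shows "xi n F' < xi n F"
proof -
  have "finite (nonedges n F)"
    by (rule finite_subset[of _ "{..<n} \<times> {..<n}"]) (auto simp: nonedges_def)
  then have "finite (inversions n F)"
    using assms(1) by (auto intro: finite_subset[of _ "F \<times> nonedges n F"] simp: inversions_def)
  moreover have "inversions n F' \<subset> inversions n F"
    using assms(2-4) by blast
  ultimately show ?thesis
    unfolding xi_eq_card by (rule psubset_card_mono)
qed

context circ_digraph
begin

text \<open>Inserting a shortest non-edge \<open>w \<rightarrow> x\<close> removes the inversion it formed with any longer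
  edge and creates none, since the new edge is no longer than any remaining non-edge.\<close>
lemma xi_insert_shortest_nonedge:
  assumes wx: "(w, x) \<in> nonedges n E" "cdist n w x = \<alpha>"
    and uv: "(u, v) \<in> E" "\<alpha> < cdist n u v"
  shows "xi n (insert (w, x) E) < xi n E"
proof (rule xi_less[OF finite_edges])
  show "inversions n (insert (w, x) E) \<subseteq> inversions n E"
  proof
    fix i assume i: "i \<in> inversions n (insert (w, x) E)"
    then obtain e f where ef: "i = (e, f)" "e \<in> insert (w, x) E" "f \<in> nonedges n E"
        "plen n f < plen n e"
      by (auto simp: inversions_def nonedges_def)
    have "\<alpha> \<le> plen n f"
      using ef(3) nonedge_length_ge by (cases f) (simp add: plen_def)
    then have "e \<noteq> (w, x)"
      using ef(4) wx(2) by (auto simp: plen_def)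
    then show "i \<in> inversions n E"
      using ef by (auto simp: inversions_def)
  qed
  show "((u, v), (w, x)) \<in> inversions n E"
    using wx uv by (simp add: inversions_def plen_def)
  show "((u, v), (w, x)) \<notin> inversions n (insert (w, x) E)"
    by (simp add: inversions_def nonedges_def)
qed

text \<open>Deleting a longest edge \<open>u \<rightarrow> v\<close> with \<open>2\<beta> \<le> n\<close> removes its inversions and creates
  none: the new non-edge has length \<open>\<beta>\<close> or \<open>n - \<beta>\<close>, both at least every edge length.\<close>
lemma xi_delete_longest_edge:
  assumes uv: "(u, v) \<in> E" "cdist n u v = \<beta>" and half: "2 * \<beta> \<le> n"
    and wx: "(w, x) \<in> nonedges n E" "cdist n w x < \<beta>"
  shows "xi n (E - {(u, v)}) < xi n E"
proof (rule xi_less[OF finite_edges])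
  have vu: "cdist n v u = n - \<beta>"
    using cdist_swap[of u n v] edgeD[OF uv(1)] uv(2) by simp
  show "inversions n (E - {(u, v)}) \<subseteq> inversions n E"
  proof
    fix i assume i: "i \<in> inversions n (E - {(u, v)})"
    then obtain e f where ef: "i = (e, f)" "e \<in> E" "f \<in> nonedges n (E - {(u, v)})"
        "plen n f < plen n e"
      by (auto simp: inversions_def)
    have "plen n e \<le> \<beta>"
      using ef(2) edge_length_le by (cases e) (simp add: plen_def)
    then have "f \<noteq> (u, v) \<and> f \<noteq> (v, u)"
      using ef(4) uv(2) vu half by (auto simp: plen_def)
    then have "f \<in> nonedges n E"
      using ef(3) by (auto simp: nonedges_def)
    then show "i \<in> inversions n E"
      using ef i by (auto simp: inversions_def)
  qed
  show "((u, v), (w, x)) \<in> inversions n E"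
    using wx uv by (simp add: inversions_def plen_def)
  show "((u, v), (w, x)) \<notin> inversions n (E - {(u, v)})"
    by (simp add: inversions_def)
qed

end

context circ_digraph
begin

context
  fixes u v
  assumes longest: "(u, v) \<in> E" "cdist n u v = \<beta>"
begin

lemma longest_edgeD: "u < n" "v < n" "u \<noteq> v" "(v, u) \<notin> E"
  using edgeD[OF longest(1)] antisym[OF longest(1)] by auto

lemma delete_longest_edge_admissible: "admissible n (E - {(u, v)})"
proof -
  have "(p, q) \<in> E - {(u, v)} \<and> (q, r) \<in> E - {(u, v)}"
    if pqr: "p < n" "q < n" "r < n" "clockwise n p q r" "(p, r) \<in> E - {(u, v)}" for p q r
  proof -
    have "(p, q) \<in> E" "(q, r) \<in> E"
      using interval[of p r q] pqr by simp_all
    moreover have "cdist n p q + cdist n q r = cdist n p r"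
      using clockwise_add pqr by blast
    moreover have "0 < cdist n p q" "0 < cdist n q r"
      using clockwise_iff[OF pqr(1-3)] clockwise_iff[OF pqr(2,3,1)] clockwise_rotate[OF pqr(1-4)]
        pqr(4) by auto
    moreover have "cdist n p r \<le> \<beta>"
      using pqr(5) edge_length_le by blast
    ultimately show ?thesis
      using longest(2) by auto
  qed
  then have "circ_interval n (E - {(u, v)})"
    using digraph by (auto simp: circ_interval_def is_digraph_def)
  moreover have "two_free (E - {(u, v)})"
    using antisym by (auto simp: two_free_def)
  ultimately show ?thesis
    by (simp add: admissible_def)
qed

text \<open>The out-neighbours of \<open>v\<close> and the in-neighbours of \<open>u\<close> lie on the arc from \<open>v\<close> back to
  \<open>u\<close>, which has \<open>n - \<beta> - 1\<close> inner vertices.\<close>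
lemma longest_edge_nbrs_bound: "card (out_nbrs E v \<union> in_nbrs E u) + \<beta> + 1 \<le> n"
proof -
  have "out_nbrs E v \<union> in_nbrs E u \<subseteq> arc n v u"
    using out_nbrs_in_arc[of v u] in_nbrs_in_arc[of v u] longest_edgeD by auto
  then have "card (out_nbrs E v \<union> in_nbrs E u) \<le> cdist n v u - 1"
    using card_mono[OF finite_arc] card_arc longest_edgeD by metis
  moreover have "cdist n u v + cdist n v u = n"
    using cdist_swap longest_edgeD by blast
  moreover have "0 < cdist n v u"
    using cdist_pos_iff longest_edgeD by auto
  ultimately show ?thesis
    using longest(2) by linarith
qed

text \<open>Deleting \<open>u \<rightarrow> v\<close> destroys at most the 2-paths \<open>u \<rightarrow> v \<rightarrow> z\<close> and \<open>z \<rightarrow> u \<rightarrow> v\<close> with \<open>z\<close>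
  a private neighbour, and creates \<open>u \<rightarrow> z \<rightarrow> v\<close> for the \<open>\<beta> - 1\<close> vertices inside the edge
  and \<open>v \<rightarrow> z \<rightarrow> u\<close> for the common neighbours \<open>z\<close>.\<close>
lemma delete_longest_edge_count:
  "P3t n E + \<beta> + 3 * card (out_nbrs E v \<inter> in_nbrs E u)
     \<le> P3t n (E - {(u, v)}) + card (out_nbrs E v) + card (in_nbrs E u) + 1"
proof -
  let ?E' = "E - {(u, v)}" and ?O = "out_nbrs E v" and ?I = "in_nbrs E u"
  have dg': "is_digraph n ?E'"
    using digraph by (auto simp: is_digraph_def)
  have fin: "finite ?O" "finite ?I" "finite (out_nbrs ?E' u \<inter> in_nbrs ?E' v)"
    using finite_nbrs[OF digraph] finite_nbrs[OF dg'] by auto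
  have "arc n u v \<subseteq> out_nbrs ?E' u \<inter> in_nbrs ?E' v"
    using interval[OF longest(1)] by (auto simp: arc_def clockwise_def)
  then have inside: "\<beta> - 1 \<le> card (out_nbrs ?E' u \<inter> in_nbrs ?E' v)"
    using card_mono[OF fin(3)] card_arc longest longest_edgeD by metis
  have "out_nbrs ?E' v = ?O" "in_nbrs ?E' u = ?I"
    using longest_edgeD by auto
  then have spanning: "card (P3_spanning n ?E' (u, v))
      = card (out_nbrs ?E' u \<inter> in_nbrs ?E' v) + card (?O \<inter> ?I)"
    using card_P3_spanning[OF dg'] longest_edgeD by (simp add: Int_commute)
  have "card (P3_using n E (u, v)) \<le> card (?O - ?I) + card (?I - ?O)"
    unfolding card_P3_using[OF digraph longest(1)]
    using fin by (intro add_mono card_mono) auto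
  moreover have "card ?O = card (?O \<inter> ?I) + card (?O - ?I)"
    using card_Int_Diff[OF fin(1)] .
  moreover have "card ?I = card (?O \<inter> ?I) + card (?I - ?O)"
    using card_Int_Diff[OF fin(2), of ?O] by (simp add: Int_commute)
  moreover have "1 \<le> \<beta>"
    using longest cdist_pos_iff longest_edgeD by fastforce
  ultimately show ?thesis
    using P3_exchange[OF longest(1), of n] inside spanning unfolding P3t_eq_card by linarith
qed

end

text \<open>If \<open>x \<rightarrow> b \<rightarrow> w\<close> for some \<open>b\<close> while \<open>x \<rightarrow> w\<close> is not an edge, then every vertex
  strictly inside the arc from \<open>x\<close> to \<open>w\<close> is an out-neighbour of \<open>x\<close> (if it precedes \<open>b\<close>)
  or an in-neighbour of \<open>w\<close> (otherwise).\<close>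
lemma arc_covered_by_common_nbr:
  assumes xw: "x < n" "w < n" "x \<noteq> w" "(x, w) \<notin> E"
    and b: "b \<in> out_nbrs E x \<inter> in_nbrs E w"
  shows "out_nbrs E x \<union> in_nbrs E w = arc n x w"
proof
  show "out_nbrs E x \<union> in_nbrs E w \<subseteq> arc n x w"
    using out_nbrs_in_arc[OF xw] in_nbrs_in_arc[OF xw] by blast
  have xb: "(x, b) \<in> E" and bw: "(b, w) \<in> E"
    using b by auto
  have bn: "b < n" and x_b_w: "clockwise n x b w"
    using b out_nbrs_in_arc[OF xw] by (auto simp: arc_def)
  show "arc n x w \<subseteq> out_nbrs E x \<union> in_nbrs E w"
  proof
    fix z assume "z \<in> arc n x w"
    then have zn: "z < n" and x_z_w: "clockwise n x z w"
      by (auto simp: arc_def)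
    consider "cdist n x z < cdist n x b" | "z = b" | "cdist n x b < cdist n x z"
      using cdist_inj_right[OF xw(1) zn bn] by (meson linorder_neqE_nat)
    then show "z \<in> out_nbrs E x \<union> in_nbrs E w"
    proof cases
      case 1
      then have "clockwise n x z b"
        using x_z_w clockwise_iff[OF xw(1) zn bn] clockwise_iff[OF xw(1) zn xw(2)] by blast
      then show ?thesis
        using interval[OF xb zn] by simp
    next
      case 2
      then show ?thesis
        using b by simp
    next
      case 3
      then have x_b_z: "clockwise n x b z"
        using x_b_w clockwise_iff[OF xw(1) bn zn] clockwise_iff[OF xw(1) bn xw(2)] by blast
      then have "cdist n x b + cdist n b z = cdist n x z"
        using clockwise_add[OF xw(1) bn zn] by blast
      moreover have "0 < cdist n b z"
        using x_b_z clockwise_rotate[OF xw(1) bn zn] clockwise_iff[OF bn zn xw(1)] by blast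
      moreover have "cdist n x b + cdist n b w = cdist n x w"
        using clockwise_add[OF xw(1) bn xw(2) x_b_w] .
      moreover have "cdist n x z < cdist n x w"
        using x_z_w clockwise_iff[OF xw(1) zn xw(2)] by blast
      ultimately have "clockwise n b z w"
        using clockwise_iff[OF bn zn xw(2)] by linarith
      then show ?thesis
        using interval[OF bw zn] by simp
    qed
  qed
qed

context
  fixes w x
  assumes shortest: "(w, x) \<in> nonedges n E" "cdist n w x = \<alpha>"
begin

lemma shortest_nonedgeD: "w < n" "x < n" "w \<noteq> x" "(w, x) \<notin> E" "(x, w) \<notin> E"
  using shortest(1) by (auto simp: nonedges_def)

text \<open>Every vertex strictly inside a shortest non-edge \<open>w \<rightarrow> x\<close> is joined from \<open>w\<close> and to
  \<open>x\<close>: both pairs are too short to be non-edges, and the reversed edges would force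
  \<open>x \<rightarrow> w\<close> by the interval property.\<close>
lemma inside_shortest_nonedge:
  assumes z: "z \<in> arc n w x"
  shows "(w, z) \<in> E \<and> (z, x) \<in> E"
proof -
  have cw: "clockwise n w z x" and zn: "z < n"
    using z by (auto simp: arc_def)
  note wzx = shortest_nonedgeD(1) zn shortest_nonedgeD(2)
  have "cdist n w z + cdist n z x = \<alpha>"
    using clockwise_add[OF wzx cw] shortest(2) by simp
  moreover have "0 < cdist n w z" "0 < cdist n z x"
    using clockwise_iff[OF wzx] clockwise_iff[of z n x w] clockwise_rotate[OF wzx cw] cw wzx by auto
  ultimately have short: "(w, z) \<notin> nonedges n E" "(z, x) \<notin> nonedges n E"
    using nonedge_length_ge by fastforce+
  have "(z, w) \<notin> E"
    using interval[of z w x] clockwise_rotate[OF wzx cw] shortest_nonedgeD by blast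
  moreover have "(x, z) \<notin> E"
    using interval[of x z w] clockwise_rotate[OF wzx(2,3,1) clockwise_rotate[OF wzx cw]]
      shortest_nonedgeD by blast
  ultimately show ?thesis
    using short zn shortest_nonedgeD cw by (auto simp: nonedges_def clockwise_def)
qed

lemma insert_shortest_nonedge_admissible: "admissible n (insert (w, x) E)"
proof -
  have "(p, q) \<in> insert (w, x) E \<and> (q, r) \<in> insert (w, x) E"
    if pqr: "p < n" "q < n" "r < n" "clockwise n p q r" "(p, r) \<in> insert (w, x) E" for p q r
  proof (cases "(p, r) = (w, x)")
    case True
    then have "q \<in> arc n w x"
      using pqr by (simp add: arc_def)
    then show ?thesis
      using inside_shortest_nonedge True by simp
  next
    case False
    then have "(p, r) \<in> E"
      using pqr(5) by auto
    then show ?thesis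
      using interval[of p r q] pqr by simp
  qed
  then have "circ_interval n (insert (w, x) E)"
    using digraph shortest_nonedgeD by (auto simp: circ_interval_def is_digraph_def)
  moreover have "two_free (insert (w, x) E)"
    using antisym shortest_nonedgeD by (auto simp: two_free_def)
  ultimately show ?thesis
    by (simp add: admissible_def)
qed

text \<open>Out-neighbours of \<open>x\<close> lie beyond \<open>x\<close> on the arc back to \<open>w\<close>, so \<open>w\<close> cannot reach
  them; symmetrically in-neighbours of \<open>w\<close> cannot reach \<open>x\<close>.\<close>
lemma out_nbr_of_shortest_nonedge_head:
  assumes "z \<in> out_nbrs E x"
  shows "z \<noteq> w \<and> z \<noteq> x \<and> (w, z) \<notin> E"
proof -
  have xzw: "x < n" "z < n" "w < n" and cw: "clockwise n x z w"
    using assms out_nbrs_in_arc[of x w] shortest_nonedgeD by (auto simp: arc_def)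
  have "clockwise n w x z"
    using clockwise_rotate[OF xzw(2,3,1) clockwise_rotate[OF xzw cw]] .
  then have "(w, z) \<notin> E"
    using interval[of w z x] shortest_nonedgeD by blast
  then show ?thesis
    using cw by (auto simp: clockwise_def)
qed

lemma in_nbr_of_shortest_nonedge_tail:
  assumes "z \<in> in_nbrs E w"
  shows "z \<noteq> x \<and> z \<noteq> w \<and> (z, x) \<notin> E"
proof -
  have xzw: "x < n" "z < n" "w < n" and cw: "clockwise n x z w"
    using assms in_nbrs_in_arc[of x w] shortest_nonedgeD by (auto simp: arc_def)
  have "(z, x) \<notin> E"
    using interval[of z x w] clockwise_rotate[OF xzw cw] shortest_nonedgeD by blast
  then show ?thesis
    using cw by (auto simp: clockwise_def)
qed

text \<open>Inserting \<open>w \<rightarrow> x\<close> destroys at most the \<open>\<alpha> - 1\<close> paths \<open>w \<rightarrow> z \<rightarrow> x\<close> and the paths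
  \<open>x \<rightarrow> z \<rightarrow> w\<close> through common neighbours, and creates \<open>w \<rightarrow> x \<rightarrow> z\<close> and \<open>z \<rightarrow> w \<rightarrow> x\<close>
  for every private out-neighbour of \<open>x\<close> and in-neighbour of \<open>w\<close>.\<close>
lemma insert_shortest_nonedge_count:
  "P3t n E + card (out_nbrs E x) + card (in_nbrs E w) + 1
     \<le> P3t n (insert (w, x) E) + \<alpha> + 3 * card (out_nbrs E x \<inter> in_nbrs E w)"
proof -
  let ?F = "insert (w, x) E" and ?O = "out_nbrs E x" and ?I = "in_nbrs E w"
  have dgF: "is_digraph n ?F"
    using insert_shortest_nonedge_admissible by (simp add: admissible_def circ_interval_def)
  have fin: "finite ?O" "finite ?I" "finite (out_nbrs E w)"
    using finite_nbrs[OF digraph] by auto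
  have F_minus: "?F - {(w, x)} = E"
    using shortest_nonedgeD by auto
  have "card (out_nbrs E w \<inter> in_nbrs E x) \<le> card (arc n w x)"
    using out_nbrs_in_arc[of w x] shortest_nonedgeD fin(3) finite_arc
    by (meson Int_lower1 card_mono order_trans)
  then have inside: "card (out_nbrs E w \<inter> in_nbrs E x) + 1 \<le> \<alpha>"
    using card_arc shortest shortest_nonedgeD cdist_pos_iff[of w n x] by fastforce
  have spanning: "card (P3_spanning n E (w, x))
      = card (out_nbrs E w \<inter> in_nbrs E x) + card (?O \<inter> ?I)"
    using card_P3_spanning[OF digraph] shortest_nonedgeD by (simp add: Int_commute)
  have "out_nbrs ?F x - ({w} \<union> out_nbrs ?F w \<union> in_nbrs ?F w) = ?O - ?I"
    using out_nbr_of_shortest_nonedge_head shortest_nonedgeD by auto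
  moreover have "in_nbrs ?F w - ({x} \<union> out_nbrs ?F x \<union> in_nbrs ?F x) = ?I - ?O"
    using in_nbr_of_shortest_nonedge_tail shortest_nonedgeD by auto
  ultimately have using_eq: "card (P3_using n ?F (w, x)) = card (?O - ?I) + card (?I - ?O)"
    using card_P3_using[OF dgF insertI1] by simp
  have "card ?O = card (?O \<inter> ?I) + card (?O - ?I)"
    using card_Int_Diff[OF fin(1)] .
  moreover have "card ?I = card (?O \<inter> ?I) + card (?I - ?O)"
    using card_Int_Diff[OF fin(2), of ?O] by (simp add: Int_commute)
  ultimately show ?thesis
    using P3_exchange[of "(w, x)" ?F n] F_minus inside spanning using_eq
    unfolding P3t_eq_card by simp
qed

end

end

locale optimal_digraph = circ_digraph +
  assumes n_ge_4: "4 \<le> n"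
    and optimal: "optimal n E"
    and alphaG_less_beta: "alphaG n E < enat \<beta>"
begin

lemma P3_le_optimal: "admissible n F \<Longrightarrow> P3t n F \<le> P3t n E"
  using optimal by (simp add: optimal_def)

lemma P3_less_optimal: "admissible n F \<Longrightarrow> xi n F < xi n E \<Longrightarrow> P3t n F < P3t n E"
  using optimal unfolding optimal_def by (meson le_neq_implies_less not_le)

lemma nonedges_nonempty: "nonedges n E \<noteq> {}"
  using alphaG_less_beta by (auto simp: alphaG_def)

lemma alpha_less_beta: "\<alpha> < \<beta>"
  using alphaG_less_beta nonedges_nonempty by (simp add: alphaG_def)

lemma shortest_nonedge_exists: "\<exists>w x. (w, x) \<in> nonedges n E \<and> cdist n w x = \<alpha>"
proof -
  have "Min (plen n ` nonedges n E) \<in> plen n ` nonedges n E"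
    using nonedges_nonempty finite_nonedges by (intro Min_in) auto
  then obtain p where "p \<in> nonedges n E" "plen n p = Min (plen n ` nonedges n E)"
    by force
  then show ?thesis
    using nonedges_nonempty by (cases p) (auto simp: alphaG_def plen_def)
qed

lemma longest_edge_exists: "\<exists>u v. (u, v) \<in> E \<and> cdist n u v = \<beta>"
proof -
  have "E \<noteq> {}"
    using alpha_less_beta by (auto simp: betaG_def)
  then have "Max (plen n ` E) \<in> plen n ` E"
    using finite_edges by (intro Max_in) auto
  then obtain p where "p \<in> E" "plen n p = Max (plen n ` E)"
    by force
  then show ?thesis
    using \<open>E \<noteq> {}\<close> by (cases p) (auto simp: betaG_def plen_def)
qed

lemma beta_less_n: "\<beta> < n"
  using longest_edge_exists edgeD cdist_less by metis

context
  fixes u v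
  assumes longest: "(u, v) \<in> E" "cdist n u v = \<beta>"
begin

text \<open>Optimality against the deletion of \<open>u \<rightarrow> v\<close>: first a weak comparison shows \<open>2\<beta> \<le> n\<close>,
  which makes the deletion lower \<open>\<xi>\<close>; the resulting strict comparison bounds the
  neighbourhoods of \<open>u\<close> and \<open>v\<close> from above.\<close>
lemma delete_longest_edge_bound:
  "2 * (card (out_nbrs E v) + card (in_nbrs E u)) + 4 * \<beta> + 3 \<le> 3 * n"
proof -
  let ?O = "out_nbrs E v" and ?I = "in_nbrs E u"
  have count: "P3t n E + \<beta> + 3 * card (?O \<inter> ?I) \<le> P3t n (E - {(u, v)}) + card ?O + card ?I + 1"
    using delete_longest_edge_count[OF longest] .
  have union: "card (?O \<union> ?I) + \<beta> + 1 \<le> n"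
    using longest_edge_nbrs_bound[OF longest] .
  have incl_excl: "card ?O + card ?I = card (?O \<union> ?I) + card (?O \<inter> ?I)"
    using card_Un_Int finite_nbrs[OF digraph] by blast
  have adm: "admissible n (E - {(u, v)})"
    using delete_longest_edge_admissible[OF longest] .
  have "2 * \<beta> \<le> n"
    using count union incl_excl P3_le_optimal[OF adm] by linarith
  moreover obtain w x where "(w, x) \<in> nonedges n E" "cdist n w x = \<alpha>"
    using shortest_nonedge_exists by blast
  ultimately have "xi n (E - {(u, v)}) < xi n E"
    using xi_delete_longest_edge[OF longest] alpha_less_beta by simp
  then have "P3t n (E - {(u, v)}) < P3t n E"
    using P3_less_optimal[OF adm] by blast
  then have "\<beta> + 3 * card (?O \<inter> ?I) \<le> card ?O + card ?I"
    using count by linarith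
  then show ?thesis
    using union incl_excl unfolding distrib_left by linarith
qed

text \<open>Combining this with the neighbourhoods forced by \<alpha> and \<beta>: the paper's upper bound
  \<open>4(\<alpha> + \<beta>) \<le> 3n + 1\<close>, sharpened by one if an end of the edge lies on no shortest
  non-edge.\<close>
lemma longest_edge_consequences:
  "\<alpha> + \<beta> < n \<and> 4 * (\<alpha> + \<beta>) \<le> 3 * n + 1 \<and>
   (\<not> on_shortest_nonedge u \<or> \<not> on_shortest_nonedge v \<longrightarrow> 4 * (\<alpha> + \<beta>) + 1 \<le> 3 * n)"
proof -
  let ?O = "out_nbrs E v" and ?I = "in_nbrs E u"
  have bound: "2 * card ?O + 2 * card ?I + 4 * \<beta> + 3 \<le> 3 * n"
    using delete_longest_edge_bound by simp
  have uv: "u < n" "v < n"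
    using longest_edgeD[OF longest] by auto
  have fin: "finite ?O" "finite ?I"
    using finite_nbrs[OF digraph] by auto
  have out_low: "m \<le> card ?O + 1"
    if "m + \<beta> \<le> n" "m \<le> \<alpha> \<or> \<not> on_shortest_nonedge v \<and> m \<le> \<alpha> + 1" for m
  proof -
    have "card (out_ball n v m) \<le> card ?O"
      using card_mono[OF fin(1) out_ball_sub_out_nbrs[OF uv(2) that]] .
    then show ?thesis
      using card_out_ball[OF uv(2), of m] that(1) by linarith
  qed
  have in_low: "m \<le> card ?I + 1"
    if "m + \<beta> \<le> n" "m \<le> \<alpha> \<or> \<not> on_shortest_nonedge u \<and> m \<le> \<alpha> + 1" for m
  proof -
    have "card (in_ball n u m) \<le> card ?I"
      using card_mono[OF fin(2) in_ball_sub_in_nbrs[OF uv(1) that]] .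
    then show ?thesis
      using card_in_ball[OF uv(1), of m] that(1) by linarith
  qed
  have short: "\<alpha> + \<beta> < n"
  proof (rule ccontr)
    assume "\<not> \<alpha> + \<beta> < n"
    then have "n - \<beta> \<le> \<alpha>"
      by linarith
    then have "n - \<beta> \<le> card ?O + 1" "n - \<beta> \<le> card ?I + 1"
      using out_low[of "n - \<beta>"] in_low[of "n - \<beta>"] beta_less_n by simp_all
    then show False
      using bound beta_less_n n_ge_4 by linarith
  qed
  have "\<alpha> \<le> card ?O + 1" "\<alpha> \<le> card ?I + 1"
    using out_low[of \<alpha>] in_low[of \<alpha>] short by auto
  then have main: "4 * (\<alpha> + \<beta>) \<le> 3 * n + 1"
    using bound unfolding distrib_left by linarith
  have "4 * (\<alpha> + \<beta>) + 1 \<le> 3 * n"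
    if unmarked: "\<not> on_shortest_nonedge u \<or> \<not> on_shortest_nonedge v"
  proof -
    have "\<alpha> \<le> card ?O \<or> \<alpha> \<le> card ?I"
    proof (cases "on_shortest_nonedge v")
      case False
      then show ?thesis
        using out_low[of "\<alpha> + 1"] short by simp
    next
      case True
      then have "\<not> on_shortest_nonedge u"
        using unmarked by blast
      then show ?thesis
        using in_low[of "\<alpha> + 1"] short by simp
    qed
    then show ?thesis
      using \<open>\<alpha> \<le> card ?O + 1\<close> \<open>\<alpha> \<le> card ?I + 1\<close> bound
      unfolding distrib_left by (elim disjE) linarith+
  qed
  then show ?thesis
    using short main by blast
qed

end

lemma card_nbrs_upper:
  assumes "y < n"
  shows "card (out_nbrs E y) \<le> \<beta>" "card (in_nbrs E y) \<le> \<beta>"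
    and "\<not> on_longest_edge y \<Longrightarrow> card (out_nbrs E y) < \<beta>"
    and "\<not> on_longest_edge y \<Longrightarrow> card (in_nbrs E y) < \<beta>"
proof -
  have balls: "card (out_ball n y k) = k - 1" "card (in_ball n y k) = k - 1" if "k \<le> \<beta> + 1" for k
    using card_out_ball[OF assms] card_in_ball[OF assms] that beta_less_n by simp_all
  show "card (out_nbrs E y) \<le> \<beta>" "card (in_nbrs E y) \<le> \<beta>"
    using card_mono[OF finite_balls(1) out_nbrs_sub_ball(1)[OF assms]]
      card_mono[OF finite_balls(2) in_nbrs_sub_ball(1)[OF assms]] balls[of "\<beta> + 1"] by simp_all
  assume "\<not> on_longest_edge y"
  then show "card (out_nbrs E y) < \<beta>" "card (in_nbrs E y) < \<beta>"
    using card_mono[OF finite_balls(1) out_nbrs_sub_ball(2)[OF assms]]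
      card_mono[OF finite_balls(2) in_nbrs_sub_ball(2)[OF assms]] balls[of \<beta>] alpha_less_beta
    by simp_all
qed

context
  fixes w x
  assumes shortest: "(w, x) \<in> nonedges n E" "cdist n w x = \<alpha>"
begin

text \<open>Optimality against the insertion of \<open>w \<rightarrow> x\<close>, which always lowers \<open>\<xi>\<close>, forces a common
  neighbour \<open>x \<rightarrow> b \<rightarrow> w\<close>; then the neighbourhoods of \<open>x\<close> and \<open>w\<close> cover the long arc from
  \<open>x\<close> to \<open>w\<close>, and comparing with the degree bounds gives the lower bound on \<open>\<alpha> + \<beta>\<close>.\<close>
lemma shortest_nonedge_consequences:
  "3 * n \<le> 4 * (\<alpha> + \<beta>) + 1 \<and>
   (\<not> on_longest_edge w \<or> \<not> on_longest_edge x \<longrightarrow> 3 * n + 1 \<le> 4 * (\<alpha> + \<beta>))"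
proof -
  let ?O = "out_nbrs E x" and ?I = "in_nbrs E w"
  note wx = shortest_nonedgeD[OF shortest]
  have fin: "finite ?O" "finite ?I"
    using finite_nbrs[OF digraph] by auto
  obtain u v where longest: "(u, v) \<in> E" "cdist n u v = \<beta>"
    using longest_edge_exists by blast
  have short: "\<alpha> + \<beta> < n"
    using longest_edge_consequences[OF longest] by blast
  have "xi n (insert (w, x) E) < xi n E"
    using xi_insert_shortest_nonedge[OF shortest longest(1)] longest(2) alpha_less_beta by simp
  then have "P3t n (insert (w, x) E) < P3t n E"
    using P3_less_optimal[OF insert_shortest_nonedge_admissible[OF shortest]] by blast
  then have key: "card ?O + card ?I + 2 \<le> \<alpha> + 3 * card (?O \<inter> ?I)"
    using insert_shortest_nonedge_count[OF shortest] by linarith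
  have "\<alpha> + \<beta> \<le> n" "\<alpha> \<le> \<alpha> \<or> \<not> on_shortest_nonedge x \<and> \<alpha> \<le> \<alpha> + 1"
    using short by simp_all
  then have "card (out_ball n x \<alpha>) \<le> card ?O"
    using card_mono[OF fin(1) out_ball_sub_out_nbrs[OF wx(2)]] by blast
  then have "\<alpha> \<le> card ?O + 1"
    using card_out_ball[OF wx(2), of \<alpha>] short by linarith
  then have "card (?O \<inter> ?I) \<noteq> 0"
    using key by linarith
  then have "?O \<inter> ?I \<noteq> {}"
    by (metis card.empty)
  then obtain b where "b \<in> ?O \<inter> ?I"
    by blast
  then have "?O \<union> ?I = arc n x w"
    using arc_covered_by_common_nbr[OF wx(2,1) not_sym[OF wx(3)] wx(5)] by blast
  then have "card (?O \<union> ?I) = cdist n x w - 1"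
    using card_arc[OF wx(2,1)] by simp
  moreover have "cdist n w x + cdist n x w = n" "0 < cdist n x w"
    using cdist_swap[OF wx(1-3)] cdist_pos_iff[OF wx(2,1)] wx(3) by auto
  moreover have "card ?O + card ?I = card (?O \<union> ?I) + card (?O \<inter> ?I)"
    using card_Un_Int[OF fin] .
  ultimately have low: "3 * n \<le> 2 * card ?O + 2 * card ?I + 4 * \<alpha> + 1"
    using key shortest(2) by linarith
  note upO = card_nbrs_upper(1,3)[OF wx(2)] and upI = card_nbrs_upper(2,4)[OF wx(1)]
  have "3 * n \<le> 4 * (\<alpha> + \<beta>) + 1"
    using low upO(1) upI(1) unfolding distrib_left by linarith
  moreover have "3 * n + 1 \<le> 4 * (\<alpha> + \<beta>)"
    if unmarked: "\<not> on_longest_edge w \<or> \<not> on_longest_edge x"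
  proof (cases "on_longest_edge w")
    case True
    then have "card ?O < \<beta>"
      using unmarked upO(2) by blast
    then show ?thesis
      using low upI(1) unfolding distrib_left by linarith
  next
    case False
    then have "card ?I < \<beta>"
      using upI(2) by blast
    then show ?thesis
      using low upO(1) unfolding distrib_left by linarith
  qed
  ultimately show ?thesis
    by blast
qed

end

lemma on_longest_edge_only:
  assumes "on_longest_edge y" "\<not> on_shortest_nonedge y"
  shows "4 * (\<alpha> + \<beta>) + 1 \<le> 3 * n"
proof -
  obtain u v where uv: "longest_edge n E (u, v)" "incident y (u, v)"
    using assms(1) by auto
  then have "(u, v) \<in> E" "cdist n u v = \<beta>"
    by (auto simp: longest_edge_def plen_def)
  moreover have "\<not> on_shortest_nonedge u \<or> \<not> on_shortest_nonedge v"
    using uv(2) assms(2) by (auto simp: incident_def)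
  ultimately show ?thesis
    using longest_edge_consequences by blast
qed

lemma on_shortest_nonedge_only:
  assumes "on_shortest_nonedge y" "\<not> on_longest_edge y"
  shows "3 * n + 1 \<le> 4 * (\<alpha> + \<beta>)"
proof -
  obtain w x where wx: "shortest_nonedge n E (w, x)" "incident y (w, x)"
    using assms(1) by auto
  then have "(w, x) \<in> nonedges n E" "cdist n w x = \<alpha>"
    using nonedges_nonempty by (auto simp: shortest_nonedge_def plen_def alphaG_def)
  moreover have "\<not> on_longest_edge w \<or> \<not> on_longest_edge x"
    using wx(2) assms(2) by (auto simp: incident_def)
  ultimately show ?thesis
    using shortest_nonedge_consequences by blast
qed

end

theorem mainTheorem9:
  fixes n :: nat and E :: "(nat \<times> nat) set" and \<gamma> :: int
  assumes "n \<ge> 4"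
    and "optimal n E"
    and "enat (betaG n E) > alphaG n E"
    and "\<gamma> = 4 * (int (the_enat (alphaG n E)) + int (betaG n E)) - 3 * int n"
  shows "-1 \<le> \<gamma> \<and> \<gamma> \<le> 1
    \<and> ((\<exists>x<n. (\<exists>p. longest_edge n E p \<and> incident x p)
              \<and> \<not> (\<exists>q. shortest_nonedge n E q \<and> incident x q)) \<longrightarrow> \<gamma> = -1)
    \<and> ((\<exists>x<n. (\<exists>q. shortest_nonedge n E q \<and> incident x q)
              \<and> \<not> (\<exists>p. longest_edge n E p \<and> incident x p)) \<longrightarrow> \<gamma> = 1)"
proof -
  interpret optimal_digraph n E
    using assms(1-3) by unfold_locales (auto simp: optimal_def)
  obtain w x where "(w, x) \<in> nonedges n E" "cdist n w x = \<alpha>"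
    using shortest_nonedge_exists by blast
  then have lower: "3 * n \<le> 4 * (\<alpha> + \<beta>) + 1"
    using shortest_nonedge_consequences by blast
  obtain u v where "(u, v) \<in> E" "cdist n u v = \<beta>"
    using longest_edge_exists by blast
  then have upper: "4 * (\<alpha> + \<beta>) \<le> 3 * n + 1"
    using longest_edge_consequences by blast
  have int_bounds: "3 * int n \<le> 4 * (int \<alpha> + int \<beta>) + 1" "4 * (int \<alpha> + int \<beta>) \<le> 3 * int n + 1"
    using lower upper by simp_all
  have marked_longest: "4 * (int \<alpha> + int \<beta>) + 1 \<le> 3 * int n"
    if "on_longest_edge y" "\<not> on_shortest_nonedge y" for y
    using on_longest_edge_only[OF that] by simp
  have marked_shortest: "3 * int n + 1 \<le> 4 * (int \<alpha> + int \<beta>)"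
    if "on_shortest_nonedge y" "\<not> on_longest_edge y" for y
    using on_shortest_nonedge_only[OF that] by simp
  show ?thesis
  proof (intro conjI impI)
    show "-1 \<le> \<gamma>" "\<gamma> \<le> 1"
      using int_bounds assms(4) by linarith+
  next
    assume "\<exists>y<n. on_longest_edge y \<and> \<not> on_shortest_nonedge y"
    then obtain y where "on_longest_edge y" "\<not> on_shortest_nonedge y"
      by blast
    then show "\<gamma> = -1"
      using marked_longest int_bounds assms(4) by fastforce
  next
    assume "\<exists>y<n. on_shortest_nonedge y \<and> \<not> on_longest_edge y"
    then obtain y where "on_shortest_nonedge y" "\<not> on_longest_edge y"
      by blast
    then show "\<gamma> = 1"
      using marked_shortest int_bounds assms(4) by fastforce
  qed
qed

end
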